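(* Let $(X,d)$ be a complete metric space, let $\alpha\in[0,1)$, and let $F:(0,\infty)\to\mathbb{R}$ be a function having a finite right limit $F(t+0):=\lim_{s\to t^+}F(s)$ at every $t>0$. Suppose $T:X\to X$ satisfies, for all $x,y\in X$ with $Tx\neq Ty$, $F(d(Tx,Ty))\le\alpha F(d(x,y))$. Assume further: $(C_1')$ for $t,s\in(0,\infty)$, $t\le s$ implies $\alpha F(t)<F(s)$; and $(C_2')$ $F(t+0)>0$ for every $t\in(0,\infty)$. Then $T$ is a Picard operator.
   Context: $T$ is a Picard operator if $T$ has a unique fixed point $u\in X$ and for every $x\in X$ the sequence $(T^nx)_{n\in\mathbb{N}}$ converges to $u$. *)

theory Defs
  imports "HOL-Analysis.Analysis"
begin

definition picard_operator :: "('a::metric_space \<Rightarrow> 'a) \<Rightarrow> bool" where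
  "picard_operator T \<longleftrightarrow>
     (\<exists>!u. T u = u) \<and> (\<forall>u x. T u = u \<longrightarrow> (\<lambda>n. (T ^^ n) x) \<longlonglongrightarrow> u)"

definition right_lim :: "(real \<Rightarrow> real) \<Rightarrow> real \<Rightarrow> real" where
  "right_lim F t = Lim (at_right t) F"

end

theory Submission
  imports Defs
begin

text \<open>
  Condition (C1') with t = s forces dist (T x) (T y) < dist x y whenever x \<noteq> y, which already
  gives uniqueness of the fixed point. Near any \<epsilon> > 0 the values of F lie close to the positive
  limit F(\<epsilon>+0), so \<alpha> F(c) < F(a) for all a, c slightly above \<epsilon>; hence no pair at distance just
  above \<epsilon> is mapped to a pair at distance above \<epsilon>. This is a Meir-Keeler type condition, and
  the classical Meir-Keeler argument shows that every orbit is Cauchy and converges to the fixed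
  point.
\<close>

definition contractive_map :: "('a::metric_space \<Rightarrow> 'a) \<Rightarrow> bool" where
  "contractive_map T \<longleftrightarrow> (\<forall>x y. x \<noteq> y \<longrightarrow> dist (T x) (T y) < dist x y)"

text \<open>
  The Meir-Keeler condition asks for \<open>dist (T x) (T y) < \<epsilon>\<close> when \<open>\<epsilon> \<le> dist x y < \<epsilon> + \<eta>\<close>; the right
  limits of F only yield \<open>\<le> \<epsilon>\<close>, and contractivity makes up for the difference.
\<close>
definition weak_meir_keeler :: "('a::metric_space \<Rightarrow> 'a) \<Rightarrow> bool" where
  "weak_meir_keeler T \<longleftrightarrow>
     (\<forall>\<epsilon>>0. \<exists>\<eta>>0. \<forall>x y. dist x y < \<epsilon> + \<eta> \<longrightarrow> dist (T x) (T y) \<le> \<epsilon>)"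

lemma contractive_mapD: "contractive_map T \<Longrightarrow> x \<noteq> y \<Longrightarrow> dist (T x) (T y) < dist x y"
  by (simp add: contractive_map_def)

lemma contractive_map_dist_le: "contractive_map T \<Longrightarrow> dist (T x) (T y) \<le> dist x y"
  by (cases "x = y") (auto dest: contractive_mapD[of T x y])

lemma contractive_map_fixpoint_unique:
  "contractive_map T \<Longrightarrow> T u = u \<Longrightarrow> T v = v \<Longrightarrow> u = v"
  using contractive_mapD[of T u v] by fastforce

lemma contractive_map_continuous_on:
  assumes "contractive_map T"
  shows "continuous_on S T"
proof (rule lipschitz_on_continuous_on)
  show "1-lipschitz_on S T"
    by (rule lipschitz_onI) (simp_all add: contractive_map_dist_le[OF assms])
qed

lemma weak_meir_keelerE:
  assumes "weak_meir_keeler T" "\<epsilon> > 0"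
  obtains \<eta> where "\<eta> > 0" "\<eta> \<le> \<epsilon>" "\<And>x y. dist x y < \<epsilon> + \<eta> \<Longrightarrow> dist (T x) (T y) \<le> \<epsilon>"
proof -
  obtain \<eta> where "\<eta> > 0" and \<eta>: "\<forall>x y. dist x y < \<epsilon> + \<eta> \<longrightarrow> dist (T x) (T y) \<le> \<epsilon>"
    using assms unfolding weak_meir_keeler_def by blast
  then show thesis
    using that[of "min \<eta> \<epsilon>"] \<open>\<epsilon> > 0\<close> by auto
qed

lemma orbit_step_dist_arbitrarily_small:
  assumes "contractive_map T" "weak_meir_keeler T" "e > 0"
  shows "\<exists>n. dist ((T ^^ n) x) ((T ^^ Suc n) x) < e"
proof -
  define d where "d n = dist ((T ^^ n) x) ((T ^^ Suc n) x)" for n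
  define \<delta> where "\<delta> = Inf (range d)"
  have bdd: "bdd_below (range d)"
    by (auto simp: d_def intro!: bdd_belowI[of _ 0])
  have \<delta>_le: "\<delta> \<le> d n" for n
    unfolding \<delta>_def using bdd by (simp add: cInf_lower)
  have "\<delta> \<le> 0"
  proof (rule ccontr)
    assume "\<not> \<delta> \<le> 0"
    then have "\<delta> > 0" by simp
    then obtain \<eta> where "\<eta> > 0" "\<eta> \<le> \<delta>"
      and \<eta>: "\<And>x y. dist x y < \<delta> + \<eta> \<Longrightarrow> dist (T x) (T y) \<le> \<delta>"
      using weak_meir_keelerE[OF assms(2) \<open>\<delta> > 0\<close>] by blast
    have "Inf (range d) < \<delta> + \<eta>"
      using \<open>\<eta> > 0\<close> by (simp add: \<delta>_def)
    then obtain n where "d n < \<delta> + \<eta>"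
      by (auto simp: cInf_less_iff[OF _ bdd])
    then have "d (Suc n) \<le> \<delta>"
      using \<eta> by (simp add: d_def)
    then have "d (Suc n) = \<delta>"
      using \<delta>_le[of "Suc n"] by simp
    \<comment> \<open>the orbit then takes a step of length exactly \<delta> > 0, which the next step strictly shortens\<close>
    then have "(T ^^ Suc n) x \<noteq> (T ^^ Suc (Suc n)) x"
      using \<open>\<delta> > 0\<close> by (auto simp: d_def)
    then have "d (Suc (Suc n)) < \<delta>"
      unfolding d_def \<open>d (Suc n) = \<delta>\<close>[symmetric] using contractive_mapD[OF assms(1)] by simp
    with \<delta>_le show False by (simp add: not_le[symmetric])
  qed
  then have "Inf (range d) < e"
    using assms(3) by (simp add: \<delta>_def)
  then obtain n where "d n < e"
    by (auto simp: cInf_less_iff[OF _ bdd])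
  then show ?thesis
    unfolding d_def by blast
qed

lemma orbit_Cauchy:
  assumes "contractive_map T" "weak_meir_keeler T"
  shows "Cauchy (\<lambda>n. (T ^^ n) x)"
  unfolding Cauchy_altdef2
proof (intro allI impI)
  fix e :: real
  assume "e > 0"
  define \<epsilon> where "\<epsilon> = e / 2"
  have "\<epsilon> > 0" using \<open>e > 0\<close> by (simp add: \<epsilon>_def)
  obtain \<eta> where "\<eta> > 0" "\<eta> \<le> \<epsilon>"
    and \<eta>: "\<And>x y. dist x y < \<epsilon> + \<eta> \<Longrightarrow> dist (T x) (T y) \<le> \<epsilon>"
    using weak_meir_keelerE[OF assms(2) \<open>\<epsilon> > 0\<close>] by blast
  obtain N where N: "dist ((T ^^ N) x) ((T ^^ Suc N) x) < \<eta> / 2"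
    using orbit_step_dist_arbitrarily_small[OF assms, of "\<eta> / 2"] \<open>\<eta> > 0\<close> by auto
  have trapped: "dist ((T ^^ (N + k)) x) ((T ^^ N) x) \<le> \<epsilon> + \<eta> / 2" for k
  proof (induction k)
    case 0
    then show ?case using \<open>\<epsilon> > 0\<close> \<open>\<eta> > 0\<close> by simp
  next
    case (Suc k)
    then have "dist ((T ^^ Suc (N + k)) x) ((T ^^ Suc N) x) \<le> \<epsilon>"
      using \<eta> \<open>\<eta> > 0\<close> by simp
    moreover have "dist ((T ^^ Suc (N + k)) x) ((T ^^ N) x)
        \<le> dist ((T ^^ Suc (N + k)) x) ((T ^^ Suc N) x) + dist ((T ^^ N) x) ((T ^^ Suc N) x)"
      by (rule dist_triangle2)
    ultimately show ?case using N by simp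
  qed
  have "dist ((T ^^ n) x) ((T ^^ N) x) < e" if "n \<ge> N" for n
    using trapped[of "n - N"] that \<open>\<eta> \<le> \<epsilon>\<close> \<open>\<epsilon> > 0\<close> by (simp add: \<epsilon>_def)
  then show "\<exists>N. \<forall>n\<ge>N. dist ((T ^^ n) x) ((T ^^ N) x) < e" by blast
qed

theorem picard_operator_if_contractive_weak_meir_keeler:
  fixes T :: "'a::complete_space \<Rightarrow> 'a"
  assumes "contractive_map T" "weak_meir_keeler T"
  shows "picard_operator T"
proof -
  have orbit_tendsto_fixpoint: "\<exists>u. T u = u \<and> (\<lambda>n. (T ^^ n) x) \<longlonglongrightarrow> u" for x
  proof -
    obtain u where u: "(\<lambda>n. (T ^^ n) x) \<longlonglongrightarrow> u"
      using Cauchy_convergent[OF orbit_Cauchy[OF assms]] by (auto simp: convergent_def)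
    have "(\<lambda>n. T ((T ^^ n) x)) \<longlonglongrightarrow> T u"
      using contractive_map_continuous_on[OF assms(1), of UNIV] u
      by (rule continuous_on_tendsto_compose) simp_all
    moreover have "(\<lambda>n. T ((T ^^ n) x)) \<longlonglongrightarrow> u"
      using LIMSEQ_Suc[OF u] by simp
    ultimately have "T u = u" by (rule LIMSEQ_unique)
    with u show ?thesis by blast
  qed
  then show ?thesis
    unfolding picard_operator_def
    using contractive_map_fixpoint_unique[OF assms(1)] by metis
qed

lemma right_lim_eq: "(F \<longlongrightarrow> L) (at_right t) \<Longrightarrow> right_lim F t = L"
  for F :: "real \<Rightarrow> real"
  unfolding right_lim_def by (simp add: tendsto_Lim)

lemma scaled_lt_near_right_limit:
  fixes F :: "real \<Rightarrow> real"
  assumes "(F \<longlongrightarrow> L) (at_right t)" "L > 0" "0 \<le> \<alpha>" "\<alpha> < 1"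
  obtains b where "b > t" "\<And>a c. t < a \<Longrightarrow> a < b \<Longrightarrow> t < c \<Longrightarrow> c < b \<Longrightarrow> \<alpha> * F c < F a"
proof -
  define \<theta> where "\<theta> = (1 - \<alpha>) * L / 2"
  have "\<theta> > 0" using assms by (simp add: \<theta>_def)
  then have "eventually (\<lambda>s. dist (F s) L < \<theta>) (at_right t)"
    using assms(1) by (simp add: tendsto_iff)
  then obtain b where "b > t" and b: "\<And>s. t < s \<Longrightarrow> s < b \<Longrightarrow> \<bar>F s - L\<bar> < \<theta>"
    by (auto simp: eventually_at_right_field dist_real_def)
  have gap: "\<alpha> * (L + \<theta>) < L - \<theta>"
  proof -
    have "L - \<theta> - \<alpha> * (L + \<theta>) = (1 - \<alpha>)\<^sup>2 * L / 2"
      unfolding \<theta>_def power2_eq_square by (simp add: field_simps)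
    moreover have "(1 - \<alpha>)\<^sup>2 * L / 2 > 0"
      using assms by simp
    ultimately show ?thesis by linarith
  qed
  have "\<alpha> * F c < F a" if "t < a" "a < b" "t < c" "c < b" for a c
  proof -
    have "\<alpha> * F c \<le> \<alpha> * (L + \<theta>)"
      using b[of c] that assms(3) by (intro mult_left_mono) auto
    with gap b[of a] that show ?thesis by linarith
  qed
  with \<open>b > t\<close> show thesis using that by blast
qed

lemma F_contraction_contractive:
  fixes T :: "'a::metric_space \<Rightarrow> 'a" and F :: "real \<Rightarrow> real"
  assumes F_contraction: "\<And>x y. T x \<noteq> T y \<Longrightarrow> F (dist (T x) (T y)) \<le> \<alpha> * F (dist x y)"
    and C1: "\<And>t s. 0 < t \<Longrightarrow> t \<le> s \<Longrightarrow> \<alpha> * F t < F s"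
  shows "contractive_map T"
  unfolding contractive_map_def
proof (intro allI impI)
  fix x y :: 'a
  assume "x \<noteq> y"
  show "dist (T x) (T y) < dist x y"
  proof (cases "T x = T y")
    case False
    then show ?thesis
      using F_contraction[of x y] C1[of "dist x y" "dist (T x) (T y)"] \<open>x \<noteq> y\<close> by force
  qed (use \<open>x \<noteq> y\<close> in simp)
qed

lemma F_contraction_weak_meir_keeler:
  fixes T :: "'a::metric_space \<Rightarrow> 'a" and F :: "real \<Rightarrow> real"
  assumes F_contraction: "\<And>x y. T x \<noteq> T y \<Longrightarrow> F (dist (T x) (T y)) \<le> \<alpha> * F (dist x y)"
    and C1: "\<And>t s. 0 < t \<Longrightarrow> t \<le> s \<Longrightarrow> \<alpha> * F t < F s"
    and "0 \<le> \<alpha>" "\<alpha> < 1"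
    and rlim: "\<And>t. t > 0 \<Longrightarrow> \<exists>L. (F \<longlongrightarrow> L) (at_right t)"
    and C2: "\<And>t. t > 0 \<Longrightarrow> right_lim F t > 0"
  shows "weak_meir_keeler T"
  unfolding weak_meir_keeler_def
proof (intro allI impI)
  have contractive: "contractive_map T"
    using F_contraction C1 by (rule F_contraction_contractive)
  fix \<epsilon> :: real
  assume "\<epsilon> > 0"
  then obtain L where L: "(F \<longlongrightarrow> L) (at_right \<epsilon>)" using rlim by blast
  have "L > 0" using C2[OF \<open>\<epsilon> > 0\<close>] right_lim_eq[OF L] by simp
  obtain b where "b > \<epsilon>"
    and sep: "\<And>a c. \<epsilon> < a \<Longrightarrow> a < b \<Longrightarrow> \<epsilon> < c \<Longrightarrow> c < b \<Longrightarrow> \<alpha> * F c < F a"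
    using scaled_lt_near_right_limit[OF L \<open>L > 0\<close> assms(3,4)] by blast
  have bound: "dist (T x) (T y) \<le> \<epsilon>" if "dist x y < b" for x y
  proof (rule ccontr)
    assume "\<not> dist (T x) (T y) \<le> \<epsilon>"
    then have "\<epsilon> < dist (T x) (T y)" "T x \<noteq> T y"
      using \<open>\<epsilon> > 0\<close> by auto
    moreover have "dist (T x) (T y) < dist x y"
      using contractive_mapD[OF contractive] \<open>T x \<noteq> T y\<close> by metis
    ultimately have "\<alpha> * F (dist x y) < F (dist (T x) (T y))"
      using that by (intro sep) linarith+
    with F_contraction[OF \<open>T x \<noteq> T y\<close>] show False
      by linarith
  qed
  show "\<exists>\<eta>>0. \<forall>x y. dist x y < \<epsilon> + \<eta> \<longrightarrow> dist (T x) (T y) \<le> \<epsilon>"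
  proof (intro exI[of _ "b - \<epsilon>"] conjI allI impI)
    show "b - \<epsilon> > 0"
      using \<open>b > \<epsilon>\<close> by simp
    show "dist (T x) (T y) \<le> \<epsilon>" if "dist x y < \<epsilon> + (b - \<epsilon>)" for x y
      using bound that by simp
  qed
qed

theorem mainTheorem9:
  fixes T :: "'a::complete_space \<Rightarrow> 'a"
    and F :: "real \<Rightarrow> real"
    and \<alpha> :: real
  assumes alpha: "0 \<le> \<alpha>" "\<alpha> < 1"
    and rlim: "\<forall>t>0. \<exists>L. (F \<longlongrightarrow> L) (at_right t)"
    and contr: "\<forall>x y. T x \<noteq> T y \<longrightarrow> F (dist (T x) (T y)) \<le> \<alpha> * F (dist x y)"
    and C1: "\<forall>t s. 0 < t \<and> 0 < s \<and> t \<le> s \<longrightarrow> \<alpha> * F t < F s"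
    and C2: "\<forall>t>0. right_lim F t > 0"
  shows "picard_operator T"
proof (rule picard_operator_if_contractive_weak_meir_keeler)
  show "contractive_map T"
    by (rule F_contraction_contractive[where F = F and \<alpha> = \<alpha>]) (use contr C1 in auto)
  show "weak_meir_keeler T"
    by (rule F_contraction_weak_meir_keeler[where F = F and \<alpha> = \<alpha>]) (use contr C1 alpha rlim C2 in auto)
qed

end
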